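(* Under assumption (A), for every $\tau>0$, with probability at least $$1-\sigma\exp\Big(-\min_{g\in\{0,\dots,G\}}\Big[\nu_g n_g-\log(G+1),\ \frac{\tau^2}{\eta_g^2k^2}\Big]\Big)$$ we have, simultaneously for all $\boldsymbol{\delta}\in\bar{\mathcal{H}}$, $$\frac{2}{n}\boldsymbol{\omega}^T\mathbf{X}\boldsymbol{\delta}\le\sqrt{\frac{8K^2+4}{n}}\ \max_{g\in\{0,\dots,G\}}\Big(\zeta_g k\,\omega(\mathcal{A}_g)+\epsilon_g\sqrt{\log(G+1)}+\tau\Big),$$ where $\sigma_g,\nu_g,\eta_g,\zeta_g,\epsilon_g>0$ are group-dependent constants (those for which, for each $g$ and each $\tau>0$, with probability at least $1-\frac{\sigma_g}{G+1}\exp(-\min[\nu_gn_g-\log(G+1),\tau^2/(\eta_g^2k^2)])$ one has $\sqrt{n/n_g}\,\|\boldsymbol{\omega}_g\|_2\sup_{\mathbf{u}\in\mathcal{A}_g}\langle\mathbf{X}_g^T\boldsymbol{\omega}_g/\|\boldsymbol{\omega}_g\|_2,\mathbf{u}\rangle\le\sqrt{(2K^2+1)n}(\zeta_gk\omega(\mathcal{A}_g)+\epsilon_g\sqrt{\log(G+1)}+\tau)$), and $\sigma=\max_g\sigma_g$.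
   Context: Data enriched linear model: $G\ge1$, $p\ge1$. For $g\in\{1,\dots,G\}$, $\mathbf{X}_g\in\mathbb{R}^{n_g\times p}$ has rows $\mathbf{x}_{gi}^T$ and $\boldsymbol{\omega}_g\in\mathbb{R}^{n_g}$ has entries $\omega_{gi}$; $n=\sum_{g=1}^Gn_g$, $n_0:=n$, $\mathbf{X}_0$ and $\boldsymbol{\omega}_0=\boldsymbol{\omega}\in\mathbb{R}^n$ are the vertical stackings of the $\mathbf{X}_g$ and of the $\boldsymbol{\omega}_g$. $\mathbf{X}\in\mathbb{R}^{n\times(G+1)p}$ is the block matrix whose $g$-th block row ($g=1,\dots,G$) has $\mathbf{X}_g$ in block column $0$, $\mathbf{X}_g$ in block column $g$ and zeros elsewhere, so that $\boldsymbol{\omega}^T\mathbf{X}\boldsymbol{\delta}=\sum_{g=1}^G\boldsymbol{\omega}_g^T\mathbf{X}_g(\boldsymbol{\delta}_0+\boldsymbol{\delta}_g)$. For $g\in\{0,\dots,G\}$, $f_g$ is convex, $\boldsymbol{\beta}_g^*\in\mathbb{R}^p$, $\mathcal{C}_g$ is the cone generated by $\{\boldsymbol{\delta}:f_g(\boldsymbol{\beta}_g^*+\boldsymbol{\delta})\le f_g(\boldsymbol{\beta}_g^* )\}$, $\mathcal{A}_g=\mathcal{C}_g\cap\mathbb{S}^{p-1}$, and $\bar{\mathcal{H}}=\{\boldsymbol{\delta}=(\boldsymbol{\delta}_0^T,\dots,\boldsymbol{\delta}_G^T)^T:\boldsymbol{\delta}_g\in\mathcal{C}_g,\ \sum_{g=0}^G\sqrt{n_g/n}\|\boldsymbol{\delta}_g\|_2=1\}$.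 Gaussian width $\omega(\mathcal{V})=\mathbb{E}\sup_{\mathbf{u}\in\mathcal{V}}\langle\mathbf{h},\mathbf{u}\rangle$, $\mathbf{h}\sim N(0,I_p)$. Assumption (A): rows $\mathbf{x}_{gi}$ i.i.d. zero-mean isotropic sub-Gaussian with $\|\mathbf{x}\|_{\psi_2}\le k$; noise entries $\omega_{gi}$ i.i.d. zero-mean unit-variance sub-Gaussian with $\|\omega_{gi}\|_{\psi_2}\le K$ ($\|\cdot\|_{\psi_2}$ the sub-Gaussian norm). *)

theory Defs
  imports "HOL-Probability.Probability"
begin

(* Dimension p is the cardinality of the finite index type 'p; vectors in R^p are real^'p. *)

definition gauss_measure :: "(real^'p) measure" where
  "gauss_measure = density lborel (\<lambda>x. ennreal (\<Prod>i\<in>UNIV. std_normal_density (x $ i)))"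

definition gaussian_width :: "(real^'p) set \<Rightarrow> real" where
  "gaussian_width V = integral\<^sup>L gauss_measure (\<lambda>h. SUP u\<in>V. h \<bullet> u)"

definition subg_norm :: "'a measure \<Rightarrow> ('a \<Rightarrow> real) \<Rightarrow> ereal" where
  "subg_norm M Y =
     (if \<forall>q\<ge>1. integrable M (\<lambda>s. \<bar>Y s\<bar> powr q)
      then (SUP q\<in>{1..}. ereal ((integral\<^sup>L M (\<lambda>s. \<bar>Y s\<bar> powr q)) powr (1/q) / sqrt q))
      else \<infinity>)"

definition subg_norm_vec :: "'a measure \<Rightarrow> ('a \<Rightarrow> real^'p) \<Rightarrow> ereal" where
  "subg_norm_vec M x = (SUP u\<in>sphere 0 1. subg_norm M (\<lambda>s. x s \<bullet> u))"

(* Data indexing: group g in {1..G} has rows i < nn g.  Group 0 is the stacking of all groups. *)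
definition gidx :: "(nat \<Rightarrow> nat) \<Rightarrow> nat \<Rightarrow> nat \<Rightarrow> (nat \<times> nat) set" where
  "gidx nn G g = (if g = 0 then {(h, i). h \<in> {1..G} \<and> i < nn h} else {(g, i) | i. i < nn g})"

definition gsize :: "(nat \<Rightarrow> nat) \<Rightarrow> nat \<Rightarrow> nat \<Rightarrow> nat" where
  "gsize nn G g = (if g = 0 then (\<Sum>h\<in>{1..G}. nn h) else nn g)"

definition XTw :: "(nat \<Rightarrow> nat \<Rightarrow> 'a \<Rightarrow> real^'p) \<Rightarrow> (nat \<Rightarrow> nat \<Rightarrow> 'a \<Rightarrow> real)
                    \<Rightarrow> (nat \<Rightarrow> nat) \<Rightarrow> nat \<Rightarrow> nat \<Rightarrow> 'a \<Rightarrow> real^'p" where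
  "XTw X w nn G g s = (\<Sum>(h, i)\<in>gidx nn G g. w h i s *\<^sub>R X h i s)"

definition wnorm :: "(nat \<Rightarrow> nat \<Rightarrow> 'a \<Rightarrow> real) \<Rightarrow> (nat \<Rightarrow> nat) \<Rightarrow> nat \<Rightarrow> nat \<Rightarrow> 'a \<Rightarrow> real" where
  "wnorm w nn G g s = sqrt (\<Sum>(h, i)\<in>gidx nn G g. (w h i s)\<^sup>2)"

definition wXdelta :: "(nat \<Rightarrow> nat \<Rightarrow> 'a \<Rightarrow> real^'p) \<Rightarrow> (nat \<Rightarrow> nat \<Rightarrow> 'a \<Rightarrow> real)
                    \<Rightarrow> (nat \<Rightarrow> nat) \<Rightarrow> nat \<Rightarrow> (nat \<Rightarrow> real^'p) \<Rightarrow> 'a \<Rightarrow> real" where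
  "wXdelta X w nn G \<delta> s = (\<Sum>g\<in>{1..G}. \<Sum>i<nn g. w g i s * (X g i s \<bullet> (\<delta> 0 + \<delta> g)))"

definition err_cone :: "(nat \<Rightarrow> real^'p \<Rightarrow> real) \<Rightarrow> (nat \<Rightarrow> real^'p) \<Rightarrow> nat \<Rightarrow> (real^'p) set" where
  "err_cone f \<beta> g = cone hull {d. f g (\<beta> g + d) \<le> f g (\<beta> g)}"

definition err_set :: "(nat \<Rightarrow> real^'p \<Rightarrow> real) \<Rightarrow> (nat \<Rightarrow> real^'p) \<Rightarrow> nat \<Rightarrow> (real^'p) set" where
  "err_set f \<beta> g = err_cone f \<beta> g \<inter> sphere 0 1"

definition Hbar :: "(nat \<Rightarrow> real^'p \<Rightarrow> real) \<Rightarrow> (nat \<Rightarrow> real^'p) \<Rightarrow> (nat \<Rightarrow> nat) \<Rightarrow> nat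
                    \<Rightarrow> (nat \<Rightarrow> real^'p) set" where
  "Hbar f \<beta> nn G = {\<delta>. (\<forall>g\<in>{0..G}. \<delta> g \<in> err_cone f \<beta> g) \<and>
       (\<Sum>g\<in>{0..G}. sqrt (real (gsize nn G g) / real (gsize nn G 0)) * norm (\<delta> g)) = 1}"

definition assumptionA :: "'a measure \<Rightarrow> (nat \<Rightarrow> nat \<Rightarrow> 'a \<Rightarrow> real^'p) \<Rightarrow> (nat \<Rightarrow> nat \<Rightarrow> 'a \<Rightarrow> real)
                          \<Rightarrow> (nat \<Rightarrow> nat) \<Rightarrow> nat \<Rightarrow> real \<Rightarrow> real \<Rightarrow> bool" where
  "assumptionA M X w nn G k K \<longleftrightarrow>
     (let I = gidx nn G 0 in
      \<comment> \<open>rows: i.i.d., zero mean, isotropic, sub-Gaussian with norm at most k\<close>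
      (\<forall>(g, i)\<in>I. X g i \<in> borel_measurable M) \<and>
      prob_space.indep_vars M (\<lambda>_. borel) (\<lambda>(g, i). X g i) I \<and>
      (\<forall>(g, i)\<in>I. \<forall>(h, j)\<in>I. distr M borel (X g i) = distr M borel (X h j)) \<and>
      (\<forall>(g, i)\<in>I. integrable M (X g i) \<and> integral\<^sup>L M (X g i) = 0) \<and>
      (\<forall>(g, i)\<in>I. \<forall>u v. integrable M (\<lambda>s. (X g i s \<bullet> u) * (X g i s \<bullet> v)) \<and>
                         integral\<^sup>L M (\<lambda>s. (X g i s \<bullet> u) * (X g i s \<bullet> v)) = u \<bullet> v) \<and>
      (\<forall>(g, i)\<in>I. subg_norm_vec M (X g i) \<le> ereal k) \<and>
      \<comment> \<open>noise: i.i.d., zero mean, unit variance, sub-Gaussian with norm at most K\<close>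
      (\<forall>(g, i)\<in>I. w g i \<in> borel_measurable M) \<and>
      prob_space.indep_vars M (\<lambda>_. borel) (\<lambda>(g, i). w g i) I \<and>
      (\<forall>(g, i)\<in>I. \<forall>(h, j)\<in>I. distr M borel (w g i) = distr M borel (w h j)) \<and>
      (\<forall>(g, i)\<in>I. integrable M (w g i) \<and> integral\<^sup>L M (w g i) = 0) \<and>
      (\<forall>(g, i)\<in>I. integrable M (\<lambda>s. (w g i s)\<^sup>2) \<and> integral\<^sup>L M (\<lambda>s. (w g i s)\<^sup>2) = 1) \<and>
      (\<forall>(g, i)\<in>I. subg_norm M (w g i) \<le> ereal K))"

end

theory Submission
  imports Defs
begin

(* A union bound over the G + 1 groups.  On the intersection of the per-group good events,
   split omega^T X delta = sum_g <X_g^T omega_g, delta_g>, bound each summand by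
   ||delta_g|| * ||omega_g|| * sup_{u in A_g} <X_g^T omega_g / ||omega_g||, u> (as delta_g lies
   in the cone C_g), apply the per-group estimate and sum with the weights sqrt(n_g / n),
   which add up to 1 on H-bar. *)

lemma gidx_zero: "gidx nn G 0 = Sigma {1..G} (\<lambda>h. {..<nn h})"
  unfolding gidx_def by auto

lemma gidx_nonzero: "g \<noteq> 0 \<Longrightarrow> gidx nn G g = (\<lambda>i. (g, i)) ` {..<nn g}"
  unfolding gidx_def by auto

lemma finite_gidx: "finite (gidx nn G g)"
  by (cases "g = 0") (auto simp: gidx_zero gidx_nonzero)

lemma gsize_pos:
  assumes "G \<ge> 1" and "\<forall>g\<in>{1..G}. nn g > 0" and "g \<in> {0..G}"
  shows "gsize nn G g > 0"
proof (cases "g = 0")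
  case True
  have "0 < nn 1"
    using assms(1,2) by simp
  also have "nn 1 \<le> (\<Sum>h\<in>{1..G}. nn h)"
    using assms(1) by (intro member_le_sum) auto
  finally show ?thesis
    unfolding gsize_def using True by simp
next
  case False
  with assms(2,3) show ?thesis
    unfolding gsize_def by auto
qed

lemma XTw_inner_zero:
  "XTw X w nn G 0 s \<bullet> d = (\<Sum>h\<in>{1..G}. \<Sum>i<nn h. w h i s * (X h i s \<bullet> d))"
  unfolding XTw_def gidx_zero inner_sum_left
  by (simp add: sum.Sigma split_def)

lemma XTw_inner_nonzero:
  "g \<noteq> 0 \<Longrightarrow> XTw X w nn G g s \<bullet> d = (\<Sum>i<nn g. w g i s * (X g i s \<bullet> d))"
  unfolding XTw_def by (simp add: gidx_nonzero inner_sum_left sum.reindex inj_on_def)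

lemma wXdelta_eq_sum_XTw:
  "wXdelta X w nn G \<delta> s = (\<Sum>g\<in>{0..G}. XTw X w nn G g s \<bullet> \<delta> g)"
proof -
  have "(\<Sum>g\<in>{0..G}. XTw X w nn G g s \<bullet> \<delta> g)
      = XTw X w nn G 0 s \<bullet> \<delta> 0 + (\<Sum>g\<in>{1..G}. XTw X w nn G g s \<bullet> \<delta> g)"
    by (simp add: sum.atLeast_Suc_atMost)
  also have "\<dots> = (\<Sum>g\<in>{1..G}. \<Sum>i<nn g. w g i s * (X g i s \<bullet> \<delta> 0))
                 + (\<Sum>g\<in>{1..G}. \<Sum>i<nn g. w g i s * (X g i s \<bullet> \<delta> g))"
    by (simp add: XTw_inner_zero XTw_inner_nonzero)
  also have "\<dots> = wXdelta X w nn G \<delta> s"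
    unfolding wXdelta_def by (simp add: sum.distrib[symmetric] inner_add_right distrib_left)
  finally show ?thesis ..
qed

lemma inner_le_norm_mult_SUP_cone_sphere:
  fixes v d :: "'a::real_inner"
  assumes "cone C" and "d \<in> C"
  shows "v \<bullet> d \<le> norm d * (SUP u\<in>C \<inter> sphere 0 1. v \<bullet> u)"
proof (cases "d = 0")
  case False
  have "d /\<^sub>R norm d \<in> C \<inter> sphere 0 1"
    using assms False unfolding cone_def by simp
  moreover have "bdd_above ((\<lambda>u. v \<bullet> u) ` (C \<inter> sphere 0 1))"
    by (rule bdd_aboveI[where M = "norm v"]) (auto intro: order_trans[OF norm_cauchy_schwarz])
  ultimately have "v \<bullet> (d /\<^sub>R norm d) \<le> (SUP u\<in>C \<inter> sphere 0 1. v \<bullet> u)"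
    by (rule cSUP_upper)
  then have "norm d * (v \<bullet> (d /\<^sub>R norm d)) \<le> norm d * (SUP u\<in>C \<inter> sphere 0 1. v \<bullet> u)"
    by (rule mult_left_mono) simp
  moreover have "v \<bullet> d = norm d * (v \<bullet> (d /\<^sub>R norm d))"
    using False by simp
  ultimately show ?thesis by linarith
qed simp

lemma XTw_eq_zero_if_wnorm_eq_zero:
  assumes "wnorm w nn G g s = 0"
  shows "XTw X w nn G g s = 0"
proof -
  have "(\<Sum>(h, i)\<in>gidx nn G g. (w h i s)\<^sup>2) = 0"
    using assms unfolding wnorm_def by simp
  then have "\<forall>(h, i)\<in>gidx nn G g. w h i s = 0"
    by (subst (asm) sum_nonneg_eq_0_iff) (auto simp: finite_gidx)
  then show ?thesis
    unfolding XTw_def by (intro sum.neutral) auto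
qed

lemma XTw_inner_le_err_cone:
  assumes "d \<in> err_cone f \<beta> g"
  shows "XTw X w nn G g s \<bullet> d \<le> norm d * (wnorm w nn G g s *
           (SUP u\<in>err_set f \<beta> g. (XTw X w nn G g s /\<^sub>R wnorm w nn G g s) \<bullet> u))"
proof (cases "wnorm w nn G g s = 0")
  case True
  then show ?thesis by (simp add: XTw_eq_zero_if_wnorm_eq_zero)
next
  case False
  let ?r = "wnorm w nn G g s" and ?v = "XTw X w nn G g s /\<^sub>R wnorm w nn G g s"
  have "?v \<bullet> d \<le> norm d * (SUP u\<in>err_set f \<beta> g. ?v \<bullet> u)"
    using assms unfolding err_set_def err_cone_def
    by (intro inner_le_norm_mult_SUP_cone_sphere cone_cone_hull)
  moreover have "?r \<ge> 0"
    unfolding wnorm_def by (auto intro: sum_nonneg)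
  ultimately have "?r * (?v \<bullet> d) \<le> ?r * (norm d * (SUP u\<in>err_set f \<beta> g. ?v \<bullet> u))"
    by (rule mult_left_mono)
  moreover have "XTw X w nn G g s \<bullet> d = ?r * (?v \<bullet> d)"
    using False by simp
  ultimately show ?thesis
    by (simp only: mult.left_commute)
qed

lemma le_sqrt_div_mult_if_sqrt_div_mult_le:
  fixes a b x y :: real
  assumes "a > 0" and "b > 0" and "sqrt (a / b) * x \<le> y"
  shows "x \<le> sqrt (b / a) * y"
proof -
  have "sqrt (b / a) * (sqrt (a / b) * x) \<le> sqrt (b / a) * y"
    using assms(3) by (rule mult_left_mono) (use assms(1,2) in simp)
  moreover have "sqrt (b / a) * sqrt (a / b) = 1"
    using assms(1,2) by (simp add: real_sqrt_mult[symmetric])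
  ultimately show ?thesis
    by (simp add: mult.assoc[symmetric])
qed

lemma wXdelta_le_Max:
  assumes pos: "\<forall>g\<in>{0..G}. gsize nn G g > 0"
    and \<delta>: "\<delta> \<in> Hbar f \<beta> nn G"
    and C: "C \<ge> 0"
    and bound: "\<forall>g\<in>{0..G}. sqrt (real (gsize nn G 0) / real (gsize nn G g)) * wnorm w nn G g s *
                  (SUP u\<in>err_set f \<beta> g. (XTw X w nn G g s /\<^sub>R wnorm w nn G g s) \<bullet> u) \<le> C * B g"
  shows "wXdelta X w nn G \<delta> s \<le> C * Max (B ` {0..G})"
proof -
  let ?n = "real (gsize nn G 0)" and ?n\<^sub>g = "\<lambda>g. real (gsize nn G g)"
  have "XTw X w nn G g s \<bullet> \<delta> g \<le> (sqrt (?n\<^sub>g g / ?n) * norm (\<delta> g)) * (C * Max (B ` {0..G}))"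
    if g: "g \<in> {0..G}" for g
  proof -
    let ?S = "wnorm w nn G g s * (SUP u\<in>err_set f \<beta> g. (XTw X w nn G g s /\<^sub>R wnorm w nn G g s) \<bullet> u)"
    have "sqrt (?n / ?n\<^sub>g g) * ?S \<le> C * B g"
      using bound g by (simp only: mult.assoc)
    also have "C * B g \<le> C * Max (B ` {0..G})"
      using C g by (intro mult_left_mono Max_ge) auto
    finally have "?S \<le> sqrt (?n\<^sub>g g / ?n) * (C * Max (B ` {0..G}))"
      using pos g by (intro le_sqrt_div_mult_if_sqrt_div_mult_le) auto
    then have "norm (\<delta> g) * ?S \<le> norm (\<delta> g) * (sqrt (?n\<^sub>g g / ?n) * (C * Max (B ` {0..G})))"
      by (rule mult_left_mono) simp
    moreover have "XTw X w nn G g s \<bullet> \<delta> g \<le> norm (\<delta> g) * ?S"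
      using \<delta> g unfolding Hbar_def by (intro XTw_inner_le_err_cone) auto
    ultimately show ?thesis
      by (simp add: algebra_simps)
  qed
  then have "wXdelta X w nn G \<delta> s
      \<le> (\<Sum>g\<in>{0..G}. (sqrt (?n\<^sub>g g / ?n) * norm (\<delta> g)) * (C * Max (B ` {0..G})))"
    unfolding wXdelta_eq_sum_XTw by (rule sum_mono)
  also have "\<dots> = C * Max (B ` {0..G})"
    using \<delta> by (simp add: sum_distrib_right[symmetric] Hbar_def)
  finally show ?thesis .
qed

lemma (in prob_space) prob_INT_ge_one_minus_sum:
  assumes "finite I" and "I \<noteq> {}" and "\<And>i. i \<in> I \<Longrightarrow> E i \<in> events"
    and "\<And>i. i \<in> I \<Longrightarrow> prob (E i) \<ge> 1 - b i"
  shows "prob (\<Inter>i\<in>I. E i) \<ge> 1 - (\<Sum>i\<in>I. b i)"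
proof -
  have events: "(\<Inter>i\<in>I. E i) \<in> events"
    using assms(1-3) by (intro sets.finite_INT) auto
  have "space M - (\<Inter>i\<in>I. E i) = (\<Union>i\<in>I. space M - E i)"
    using assms(2) by auto
  moreover have "prob (\<Union>i\<in>I. space M - E i) \<le> (\<Sum>i\<in>I. prob (space M - E i))"
    using assms(1,3) by (intro finite_measure_subadditive_finite) auto
  ultimately have "prob (space M - (\<Inter>i\<in>I. E i)) \<le> (\<Sum>i\<in>I. prob (space M - E i))"
    by simp
  also have "\<dots> \<le> (\<Sum>i\<in>I. b i)"
  proof (rule sum_mono)
    fix i assume "i \<in> I"
    with assms(3,4)[OF this] show "prob (space M - E i) \<le> b i"
      by (simp add: prob_compl)
  qed
  finally show ?thesis
    using events by (simp add: prob_compl)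
qed

lemma (in prob_space) prob_INT_ge_one_minus_Max_mult_exp_Min:
  assumes "finite I" and "I \<noteq> {}" and "\<And>i. i \<in> I \<Longrightarrow> E i \<in> events"
    and "\<And>i. i \<in> I \<Longrightarrow> c i \<ge> 0"
    and "\<And>i. i \<in> I \<Longrightarrow> prob (E i) \<ge> 1 - c i / real (card I) * exp (- m i)"
  shows "prob (\<Inter>i\<in>I. E i) \<ge> 1 - Max (c ` I) * exp (- Min (m ` I))"
proof -
  have "c i / real (card I) * exp (- m i) \<le> Max (c ` I) / real (card I) * exp (- Min (m ` I))"
    if i: "i \<in> I" for i
  proof (intro mult_mono divide_right_mono)
    show "c i \<le> Max (c ` I)" and "exp (- m i) \<le> exp (- Min (m ` I))"
      using assms(1) i by simp_all
    with assms(4) i show "0 \<le> Max (c ` I) / real (card I)"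
      by (smt (verit) divide_nonneg_nonneg of_nat_0_le_iff)
  qed simp_all
  then have "(\<Sum>i\<in>I. c i / real (card I) * exp (- m i))
      \<le> (\<Sum>i\<in>I. Max (c ` I) / real (card I) * exp (- Min (m ` I)))"
    by (rule sum_mono)
  also have "\<dots> = Max (c ` I) * exp (- Min (m ` I))"
    using assms(1,2) by simp
  finally have "(\<Sum>i\<in>I. c i / real (card I) * exp (- m i)) \<le> Max (c ` I) * exp (- Min (m ` I))" .
  moreover have "1 - (\<Sum>i\<in>I. c i / real (card I) * exp (- m i)) \<le> prob (\<Inter>i\<in>I. E i)"
    by (rule prob_INT_ge_one_minus_sum) (use assms in auto)
  ultimately show ?thesis
    by linarith
qed

lemma two_div_mult_sqrt_eq:
  fixes n a :: real
  assumes "n > 0"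
  shows "2 / n * sqrt (a * n) = sqrt (4 * a / n)"
proof -
  have "sqrt (4 * a / n) = sqrt (2\<^sup>2 * (a * n) / n\<^sup>2)"
    using assms by (simp add: power2_eq_square)
  also have "\<dots> = 2 * sqrt (a * n) / n"
    using assms by (simp add: real_sqrt_divide real_sqrt_mult)
  finally show ?thesis by simp
qed

theorem theorem3:
  fixes M :: "'a measure"
    and G :: nat and nn :: "nat \<Rightarrow> nat"
    and X :: "nat \<Rightarrow> nat \<Rightarrow> 'a \<Rightarrow> real^'p" and w :: "nat \<Rightarrow> nat \<Rightarrow> 'a \<Rightarrow> real"
    and f :: "nat \<Rightarrow> real^'p \<Rightarrow> real" and \<beta> :: "nat \<Rightarrow> real^'p"
    and k K :: real
    and \<sigma>g \<nu> \<eta> \<zeta> \<epsilon> :: "nat \<Rightarrow> real"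
    and \<tau> :: real
  assumes "prob_space M"
    and "G \<ge> 1"
    and "\<forall>g\<in>{1..G}. nn g > 0"
    and "\<forall>g\<in>{0..G}. convex_on UNIV (f g)"
    and "assumptionA M X w nn G k K"
    and "\<forall>g\<in>{0..G}. \<sigma>g g > 0 \<and> \<nu> g > 0 \<and> \<eta> g > 0 \<and> \<zeta> g > 0 \<and> \<epsilon> g > 0"
    and "\<forall>g\<in>{0..G}. \<forall>t>0. \<exists>E\<in>sets M.
           measure M E \<ge> 1 - \<sigma>g g / real (G + 1) *
              exp (- min (\<nu> g * real (gsize nn G g) - ln (real (G + 1))) (t\<^sup>2 / ((\<eta> g)\<^sup>2 * k\<^sup>2))) \<and>
           (\<forall>s\<in>E. sqrt (real (gsize nn G 0) / real (gsize nn G g)) * wnorm w nn G g s *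
                    (SUP u\<in>err_set f \<beta> g. (XTw X w nn G g s /\<^sub>R wnorm w nn G g s) \<bullet> u)
                  \<le> sqrt ((2 * K\<^sup>2 + 1) * real (gsize nn G 0)) *
                    (\<zeta> g * k * gaussian_width (err_set f \<beta> g) + \<epsilon> g * sqrt (ln (real (G + 1))) + t))"
    and "\<tau> > 0"
  shows "\<exists>E\<in>sets M.
           measure M E \<ge> 1 - Max (\<sigma>g ` {0..G}) *
              exp (- Min ((\<lambda>g. min (\<nu> g * real (gsize nn G g) - ln (real (G + 1)))
                                   (\<tau>\<^sup>2 / ((\<eta> g)\<^sup>2 * k\<^sup>2))) ` {0..G})) \<and>
           (\<forall>s\<in>E. \<forall>\<delta>\<in>Hbar f \<beta> nn G.
              2 / real (gsize nn G 0) * wXdelta X w nn G \<delta> s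
              \<le> sqrt ((8 * K\<^sup>2 + 4) / real (gsize nn G 0)) *
                 Max ((\<lambda>g. \<zeta> g * k * gaussian_width (err_set f \<beta> g)
                           + \<epsilon> g * sqrt (ln (real (G + 1))) + \<tau>) ` {0..G}))"
proof -
  interpret prob_space M by fact
  let ?n = "real (gsize nn G 0)"
  let ?m = "\<lambda>g. min (\<nu> g * real (gsize nn G g) - ln (real (G + 1))) (\<tau>\<^sup>2 / ((\<eta> g)\<^sup>2 * k\<^sup>2))"
  let ?B = "\<lambda>g. \<zeta> g * k * gaussian_width (err_set f \<beta> g) + \<epsilon> g * sqrt (ln (real (G + 1))) + \<tau>"
  let ?C = "sqrt ((2 * K\<^sup>2 + 1) * ?n)"
  let ?good = "\<lambda>g s. sqrt (?n / real (gsize nn G g)) * wnorm w nn G g s *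
      (SUP u\<in>err_set f \<beta> g. (XTw X w nn G g s /\<^sub>R wnorm w nn G g s) \<bullet> u) \<le> ?C * ?B g"
  have "\<forall>g\<in>{0..G}. \<exists>E\<in>sets M.
      measure M E \<ge> 1 - \<sigma>g g / real (G + 1) * exp (- ?m g) \<and> (\<forall>s\<in>E. ?good g s)"
    using assms(7,8) by blast
  then obtain E where E: "\<And>g. g \<in> {0..G} \<Longrightarrow> E g \<in> sets M \<and>
      measure M (E g) \<ge> 1 - \<sigma>g g / real (G + 1) * exp (- ?m g) \<and> (\<forall>s\<in>E g. ?good g s)"
    by metis
  have pos: "\<forall>g\<in>{0..G}. gsize nn G g > 0"
    using assms(2,3) gsize_pos by blast
  have "1 - Max (\<sigma>g ` {0..G}) * exp (- Min (?m ` {0..G})) \<le> measure M (\<Inter>g\<in>{0..G}. E g)"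
    using E assms(6) by (intro prob_INT_ge_one_minus_Max_mult_exp_Min) (auto intro: less_imp_le)
  moreover have "2 / ?n * wXdelta X w nn G \<delta> s \<le> sqrt ((8 * K\<^sup>2 + 4) / ?n) * Max (?B ` {0..G})"
    if "s \<in> (\<Inter>g\<in>{0..G}. E g)" and "\<delta> \<in> Hbar f \<beta> nn G" for s \<delta>
  proof -
    have "wXdelta X w nn G \<delta> s \<le> ?C * Max (?B ` {0..G})"
      using that E pos by (intro wXdelta_le_Max) auto
    then have "2 / ?n * wXdelta X w nn G \<delta> s \<le> 2 / ?n * (?C * Max (?B ` {0..G}))"
      by (rule mult_left_mono) simp
    moreover have "2 / ?n * ?C = sqrt ((8 * K\<^sup>2 + 4) / ?n)"
      using pos two_div_mult_sqrt_eq[of ?n "2 * K\<^sup>2 + 1"] by simp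
    ultimately show ?thesis
      by (simp only: mult.assoc[symmetric])
  qed
  moreover have "(\<Inter>g\<in>{0..G}. E g) \<in> sets M"
    using E by (intro sets.finite_INT) auto
  ultimately show ?thesis by blast
qed

end
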